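(* For all integers $n$ define $A(n) = \sum_{k \in \mathbb{Z}} \binom{n}{k}^2\binom{n+k}{k}^2$. Then $A(-n) = A(n-1)$ for all integers $n$. Consequently, for primes $p\ge 5$ and integers $r \ge 1$, $m \ge 1$, the congruence $A(p^r m - 1) \equiv A(p^{r-1}m - 1) \pmod{p^{3r}}$ is equivalent to $A(p^r m') \equiv A(p^{r-1} m') \pmod{p^{3r}}$ with $m'=-m$.
   Context: For all integers $n, k$, the binomial coefficient is defined by $\binom{n}{k} = \lim_{z \to 0} \frac{\Gamma(z+n+1)}{\Gamma(z+k+1)\Gamma(z+n-k+1)}$. This is a finite integer for all $n,k\in\mathbb{Z}$, agrees with the usual binomial coefficient for $n \ge 0$, and satisfies $\binom{n}{k}=\binom{n}{n-k}$. For $n\ge0$, $A(n)$ is the Apéry number $\sum_{k=0}^n\binom{n}{k}^2\binom{n+k}{k}^2$. *)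

theory Defs
  imports "HOL-Analysis.Analysis"
begin

definition binomZ :: "int \<Rightarrow> int \<Rightarrow> real" where
  "binomZ n k = Lim (at (0::real))
     (\<lambda>z. Gamma (z + of_int n + 1) / (Gamma (z + of_int k + 1) * Gamma (z + of_int n - of_int k + 1)))"

definition apery :: "int \<Rightarrow> real" where
  "apery n = (\<Sum>\<^sub>\<infinity>k::int. (binomZ n k)^2 * (binomZ (n + k) k)^2)"

end

theory Submission imports Defs begin

text \<open>Rewrite the Gamma quotient defining binomZ in terms of the entire function
  rGamma = 1/Gamma. Near a non-positive integer -m, rGamma (z - m) = z * R m z, where R = rGamma_regular is continuous
  with R m 0 = (-1)^m m! \<noteq> 0, so each limit defining binomZ is the value at 0 of a continuous
  quotient once the simple zeros of numerator and denominator are cancelled. This yields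
  the ordinary binomial coefficient for n \<ge> 0, binomZ (-M-1) K = (-1)^K (M+K choose K) for K \<ge> 0,
  and binomZ (-M-1) (-J-1) = 0 for J < M. Hence for N \<ge> 1 the k-th summands of A(-N) and A(N-1)
  coincide: both vanish unless 0 \<le> k < N, where both equal (N-1 choose k)^2 (N-1+k choose k)^2.
  The congruence equivalence is then immediate (for any p, r, m) from A(p^r m - 1) = A(-p^r m).\<close>

lemma Gamma_quotient_eq_rGamma:
  "Gamma (a::real) / (Gamma b * Gamma c) = rGamma b * rGamma c / rGamma a"
  by (simp add: rGamma_inverse_Gamma divide_inverse inverse_mult_distrib mult_ac)

definition rGamma_regular :: "nat \<Rightarrow> real \<Rightarrow> real" where
  "rGamma_regular m z = pochhammer (z - of_nat m) m * rGamma (z + 1)"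

lemma rGamma_minus_of_nat: "rGamma (z - of_nat m) = z * rGamma_regular m z"
proof -
  have "rGamma (z - of_nat m) =
      pochhammer (z - of_nat m) (Suc m) * rGamma (z - of_nat m + of_nat (Suc m))"
    by (rule pochhammer_rGamma)
  also have "pochhammer (z - of_nat m) (Suc m) = z * pochhammer (z - of_nat m) m"
    by (simp add: pochhammer_rec')
  finally show ?thesis by (simp add: rGamma_regular_def)
qed

lemma isCont_rGamma_regular [continuous_intros]: "isCont (rGamma_regular m) z"
  unfolding rGamma_regular_def pochhammer_prod by (intro continuous_intros)

lemma rGamma_regular_0: "rGamma_regular m 0 = (-1)^m * fact m"
  unfolding rGamma_regular_def by (simp add: pochhammer_minus pochhammer_fact)

lemma rGamma_regular_0_nonzero: "rGamma_regular m 0 \<noteq> 0"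
  by (simp add: rGamma_regular_0)

lemma rGamma_of_nat_plus_1: "rGamma (of_nat k + 1 :: real) = inverse (fact k)"
  using Gamma_fact[of k] by (simp add: rGamma_inverse_Gamma add.commute)

lemma Lim_at_0_continuous:
  assumes "isCont g 0" "\<And>z. z \<noteq> 0 \<Longrightarrow> f z = g z"
  shows "Lim (at (0::real)) f = g 0"
proof (rule tendsto_Lim)
  show "\<not> trivial_limit (at (0::real))" by simp
  have "eventually (\<lambda>z. g z = f z) (at (0::real))"
    using assms(2) by (simp add: eventually_at_filter)
  then show "(f \<longlongrightarrow> g 0) (at 0)"
    using assms(1) tendsto_cong by (force simp: isCont_def)
qed

lemma binomZ_eq_Lim_rGamma: "binomZ n k = Lim (at (0::real))
   (\<lambda>z. rGamma (z + of_int k + 1) * rGamma (z + of_int n - of_int k + 1) / rGamma (z + of_int n + 1))"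
  unfolding binomZ_def Gamma_quotient_eq_rGamma ..

lemma binomZ_nonneg:
  assumes "n \<ge> 0"
  shows "binomZ n k = (if 0 \<le> k \<and> k \<le> n then of_nat (nat n choose nat k) else 0)"
proof -
  obtain a where a: "n = int a" using assms nonneg_eq_int by blast
  have top: "(0::real) + of_int n + 1 = of_nat a + 1" using a by simp
  have "rGamma (0 + of_int n + 1 :: real) \<noteq> 0"
    unfolding top rGamma_of_nat_plus_1 by simp
  then have "binomZ n k =
      rGamma (0 + of_int k + 1) * rGamma (0 + of_int n - of_int k + 1) / rGamma (0 + of_int n + 1)"
    unfolding binomZ_eq_Lim_rGamma by (intro Lim_at_0_continuous) (auto intro!: continuous_intros)
  also have "\<dots> = rGamma (of_int (k+1)) * rGamma (of_int (n-k+1)) / rGamma (of_nat a + 1)"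
    using top by simp
  also have "\<dots> = (if 0 \<le> k \<and> k \<le> n then of_nat (nat n choose nat k) else 0)"
  proof (cases "0 \<le> k \<and> k \<le> n")
    case True
    then obtain b where b: "k = int b" using nonneg_eq_int by blast
    have ba: "b \<le> a" using True a b by simp
    have 1: "rGamma (of_int (k+1)) = (inverse (fact b) :: real)"
      using b rGamma_of_nat_plus_1[of b] by simp
    have 2: "rGamma (of_int (n-k+1)) = (inverse (fact (a-b)) :: real)"
      using a b ba rGamma_of_nat_plus_1[of "a-b"] by (simp add: of_nat_diff)
    have 3: "(of_nat (nat n choose nat k) :: real) = fact a / (fact b * fact (a-b))"
      using a b ba by (simp add: binomial_fact)
    show ?thesis
      unfolding 1 2 3 rGamma_of_nat_plus_1 using True by (simp add: divide_inverse mult_ac)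
  next
    case False
    have "rGamma (of_int (k+1)) = (0::real) \<or> rGamma (of_int (n-k+1)) = (0::real)"
      using False unfolding rGamma_of_int by auto
    with False show ?thesis by auto
  qed
  finally show ?thesis .
qed

lemma binomZ_neg_nat:
  "binomZ (- int M - 1) (int K) = (-1)^K * of_nat (M + K choose K)"
proof -
  have top: "z + of_int (- int M - 1) + 1 = z - of_nat M" for z :: real
    by simp
  have bottom: "rGamma (z + of_int (- int M - 1) - of_int (int K) + 1) = z * rGamma_regular (M+K) z"
    for z :: real
    using rGamma_minus_of_nat[of z "M+K"] by (simp add: algebra_simps)
  have "binomZ (- int M - 1) (int K) =
      (\<lambda>z. rGamma (z + of_int (int K) + 1) * rGamma_regular (M+K) z / rGamma_regular M z) 0"
    unfolding binomZ_eq_Lim_rGamma top bottom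
    by (rule Lim_at_0_continuous)
      (auto intro!: continuous_intros simp: rGamma_regular_0_nonzero rGamma_minus_of_nat)
  also have "\<dots> = (-1)^K * (fact (M+K) / (fact K * fact M))"
    using rGamma_of_nat_plus_1[of K] by (simp add: rGamma_regular_0 power_add field_simps)
  also have "fact (M+K) / (fact K * fact M) = (of_nat (M + K choose K) :: real)"
    by (simp add: binomial_fact)
  finally show ?thesis .
qed

lemma binomZ_neg_neg:
  assumes "J < M"
  shows "binomZ (- int M - 1) (- int J - 1) = 0"
proof -
  have top: "z + of_int (- int M - 1) + 1 = z - of_nat M"
    and left: "z + of_int (- int J - 1) + 1 = z - of_nat J" for z :: real
    by simp_all
  have right: "rGamma (z + of_int (- int M - 1) - of_int (- int J - 1) + 1) = z * rGamma_regular (M-J-1) z"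
    for z :: real
    using assms rGamma_minus_of_nat[of z "M-J-1"] by (simp add: of_nat_diff algebra_simps)
  have "binomZ (- int M - 1) (- int J - 1) =
      (\<lambda>z. z * rGamma_regular J z * rGamma_regular (M-J-1) z / rGamma_regular M z) 0"
    unfolding binomZ_eq_Lim_rGamma top left right
    by (rule Lim_at_0_continuous)
      (auto intro!: continuous_intros simp: rGamma_regular_0_nonzero rGamma_minus_of_nat)
  then show ?thesis by simp
qed

lemma apery_summand_reflect:
  fixes N k :: int
  assumes "N \<ge> 1"
  shows "(binomZ (-N) k)^2 * (binomZ (-N+k) k)^2 = (binomZ (N-1) k)^2 * (binomZ (N-1+k) k)^2"
proof (cases "0 \<le> k \<and> k < N")
  case True
  define a b where "a = nat (N-1)" and "b = nat k"
  have ab: "N = int a + 1" "k = int b" "b \<le> a"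
    using assms True unfolding a_def b_def by auto
  have "binomZ (-N) k = (-1)^b * of_nat (a + b choose b)"
    using binomZ_neg_nat[of a b] ab by simp
  moreover have "binomZ (-N+k) k = (-1)^b * of_nat (a choose b)"
  proof -
    have "-N+k = - int (a-b) - 1" using ab by simp
    then show ?thesis
      using binomZ_neg_nat[of "a-b" b] ab by (simp only:) simp
  qed
  moreover have "binomZ (N-1) k = of_nat (a choose b)"
    using ab by (simp add: binomZ_nonneg)
  moreover have "binomZ (N-1+k) k = of_nat (a + b choose b)"
    using ab by (simp add: binomZ_nonneg nat_add_distrib)
  ultimately show ?thesis
    by (simp add: power_mult_distrib flip: power_mult)
next
  case outside: False
  have "binomZ (N-1) k = 0 \<or> binomZ (N-1+k) k = 0"
    using assms outside by (auto simp: binomZ_nonneg)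
  moreover have "binomZ (-N) k = 0 \<or> binomZ (-N+k) k = 0"
  proof (cases "k < 0")
    case True
    show ?thesis
    proof (cases "k > -N")
      case True
      with \<open>k < 0\<close> have "binomZ (- int (nat (N-1)) - 1) (- int (nat (-k-1)) - 1) = 0"
        by (intro binomZ_neg_neg) auto
      with True \<open>k < 0\<close> show ?thesis by simp
    next
      case False
      with \<open>k < 0\<close> assms have "binomZ (- int (nat (N-k-1)) - 1) (- int (nat (-k-1)) - 1) = 0"
        by (intro binomZ_neg_neg) auto
      with False \<open>k < 0\<close> assms show ?thesis by simp
    qed
  next
    case False
    with outside assms have "binomZ (-N+k) k = 0"
      by (simp add: binomZ_nonneg)
    then show ?thesis ..
  qed
  ultimately show ?thesis by auto
qed

lemma apery_reflect: "apery (-n) = apery (n-1)"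
proof -
  have "apery (-N) = apery (N-1)" if "N \<ge> 1" for N
    unfolding apery_def by (rule infsum_cong) (rule apery_summand_reflect[OF that])
  from this[of n] this[of "1-n"] show ?thesis
    by (cases "n \<ge> 1") simp_all
qed

theorem mainTheorem4:
  shows "(\<forall>n::int. apery (- n) = apery (n - 1)) \<and>
    (\<forall>(p::int) (r::nat) (m::int). prime p \<and> p \<ge> 5 \<and> r \<ge> 1 \<and> m \<ge> 1 \<longrightarrow>
       ((\<exists>t::int. apery (p ^ r * m - 1) - apery (p ^ (r - 1) * m - 1) = of_int (p ^ (3 * r)) * of_int t)
        \<longleftrightarrow>
        (let m' = - m in
         \<exists>t::int. apery (p ^ r * m') - apery (p ^ (r - 1) * m') = of_int (p ^ (3 * r)) * of_int t)))"
proof -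
  have "apery (q * m - 1) = apery (q * (- m))" for q m :: int
    using apery_reflect[of "q * m"] by simp
  then show ?thesis
    using apery_reflect by (simp add: Let_def)
qed

end
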